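(* Let $S$ be an investment strategy with parameter space $\mathbb W=\mathcal W_k^\ell$ satisfying condition $(\mathrm L_\varepsilon)$ for some $\varepsilon\in(0,1)$. For each $t\ge0$ let $\zeta_t=\mathcal R_t/\int_{\mathbb W}\mathcal R_t\,d\mu$ and let $\bar\zeta_t$ be any probability density with respect to $\mu$ on $\mathbb W$ satisfying $\int_{\mathbb W}|\zeta_t-\bar\zeta_t|\,d\mu\le\frac{\varepsilon^2}{4m(t+1)^4}$. Let $\bar{\mathcal U}(S)$ be the parameter-free strategy with $\bar{\mathcal U}_t(S)=\int_{\mathbb W}S_t(\mathbf w)\bar\zeta_t(\mathbf w)\,d\mu(\mathbf w)$. Then (1) $\mathcal R_n(\bar{\mathcal U}(S))\ge(1-\varepsilon)\mathcal R_n(\mathcal U(S))$ for all $n\ge0$; (2) if $\mathcal U(S)$ is a universalization of $S$, then so is $\bar{\mathcal U}(S)$.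
   Context: Let $m\ge2$ and let $\mathbf x_0,\mathbf x_1,\dots\in(0,\infty)^m$ be return vectors. $\mathcal W_k=\{\mathbf w\in[0,1]^k:\sum_i w_i=1\}$. An investment strategy $S$ with parameter space $\mathbb W=\mathcal W_k^\ell$ assigns to each $t\ge0$, $\mathbf w\in\mathbb W$ a description $S_t(\mathbf w)\in\mathcal W_m$, measurable in $\mathbf w$; $\mathcal R_n(\mathbf w)=\prod_{t=0}^{n-1}S_t(\mathbf w)\cdot\mathbf x_t$ ($\mathcal R_0\equiv1$), $\mathcal L_n(S(\mathbf w))=\frac1n\log\mathcal R_n(\mathbf w)$; for parameter-free $U$, $\mathcal R_n(U)=\prod_{t<n}U_t\cdot\mathbf x_t$, $\mathcal L_n(U)=\frac1n\log\mathcal R_n(U)$. $\mu$ is the uniform probability measure on $\mathbb W$, and $\mathcal U(S)$ has $\mathcal U_t(S)=\int_{\mathbb W}S_t\mathcal R_t\,d\mu/\int_{\mathbb W}\mathcal R_t\,d\mu$. $U$ is a universalization of $S$ if there is $\eta_n\to0$, independent of market data, with $\mathcal L_n(U)\ge\sup_{\mathbf w}\mathcal L_n(S(\mathbf w))-\eta_n$ for all $n$ and all market sequences. Condition $(\mathrm L_\varepsilon)$: $S_{ti}(\mathbf w)\ge\frac{\varepsilon}{2m(t+1)^2}$ for all $t\ge0$, $1\le i\le m$, $\mathbf w\in\mathbb W$. *)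

theory Defs
  imports "HOL-Probability.Probability"
begin

(* A market sequence: x t i = return of asset i (i < m) in period t. *)
type_synonym market = "nat \<Rightarrow> nat \<Rightarrow> real"
(* A parameter w in W_k^l: w j i = i-th coordinate (i < k) of the j-th factor (j < l). *)
type_synonym param = "nat \<Rightarrow> nat \<Rightarrow> real"

definition prob_simplex :: "nat \<Rightarrow> (nat \<Rightarrow> real) set" where
  "prob_simplex k = {w. (\<forall>i<k. 0 \<le> w i \<and> w i \<le> 1) \<and> (\<Sum>i<k. w i) = 1}"

definition corner :: "nat \<Rightarrow> (nat \<Rightarrow> real) set" where
  "corner k = {y \<in> space (PiM {..<k-1} (\<lambda>_. lborel :: real measure)).
                 (\<forall>i<k-1. 0 \<le> y i) \<and> (\<Sum>i<k-1. y i) \<le> 1}"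

(* Embedding of the corner onto the prob_simplex W_k (points outside go to a vertex) *)
definition corner_emb :: "nat \<Rightarrow> (nat \<Rightarrow> real) \<Rightarrow> (nat \<Rightarrow> real)" where
  "corner_emb k y = (if y \<in> corner k
      then (\<lambda>i\<in>{..<k}. if i < k - 1 then y i else 1 - (\<Sum>j<k-1. y j))
      else (\<lambda>i\<in>{..<k}. if i = k - 1 then 1 else 0))"

(* Uniform probability measure on the prob_simplex W_k (image of normalized Lebesgue measure
   on the corner under the affine parametrization by the first k-1 coordinates). *)
definition simplex_measure :: "nat \<Rightarrow> (nat \<Rightarrow> real) measure" where
  "simplex_measure k =
     distr (uniform_measure (PiM {..<k-1} (\<lambda>_. lborel :: real measure)) (corner k))
           (restrict_space (PiM {..<k} (\<lambda>_. lborel :: real measure))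
                           (prob_simplex k \<inter> extensional {..<k}))
           (corner_emb k)"

definition param_measure :: "nat \<Rightarrow> nat \<Rightarrow> param measure" where
  "param_measure k l = PiM {..<l} (\<lambda>_. simplex_measure k)"

definition dotp :: "nat \<Rightarrow> (nat \<Rightarrow> real) \<Rightarrow> (nat \<Rightarrow> real) \<Rightarrow> real" where
  "dotp m s y = (\<Sum>i<m. s i * y i)"

definition valid_market :: "nat \<Rightarrow> market \<Rightarrow> bool" where
  "valid_market m x \<longleftrightarrow> (\<forall>t. \<forall>i<m. 0 < x t i)"

(* Strategies may depend on the market sequence x: S x t w is the description S_t(w). *)
definition is_strategy :: "nat \<Rightarrow> param measure \<Rightarrow> (market \<Rightarrow> nat \<Rightarrow> param \<Rightarrow> nat \<Rightarrow> real) \<Rightarrow> bool" where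
  "is_strategy m M S \<longleftrightarrow> (\<forall>x t. (\<forall>w\<in>space M. S x t w \<in> prob_simplex m)
       \<and> (\<forall>i<m. (\<lambda>w. S x t w i) \<in> borel_measurable M))"

definition wealth :: "nat \<Rightarrow> (market \<Rightarrow> nat \<Rightarrow> param \<Rightarrow> nat \<Rightarrow> real) \<Rightarrow> market \<Rightarrow> nat \<Rightarrow> param \<Rightarrow> real" where
  "wealth m S x n w = (\<Prod>t<n. dotp m (S x t w) (x t))"

definition wealth_pf :: "nat \<Rightarrow> (market \<Rightarrow> nat \<Rightarrow> nat \<Rightarrow> real) \<Rightarrow> market \<Rightarrow> nat \<Rightarrow> real" where
  "wealth_pf m U x n = (\<Prod>t<n. dotp m (U x t) (x t))"

definition growth :: "nat \<Rightarrow> (market \<Rightarrow> nat \<Rightarrow> param \<Rightarrow> nat \<Rightarrow> real) \<Rightarrow> market \<Rightarrow> nat \<Rightarrow> param \<Rightarrow> real" where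
  "growth m S x n w = ln (wealth m S x n w) / real n"

definition growth_pf :: "nat \<Rightarrow> (market \<Rightarrow> nat \<Rightarrow> nat \<Rightarrow> real) \<Rightarrow> market \<Rightarrow> nat \<Rightarrow> real" where
  "growth_pf m U x n = ln (wealth_pf m U x n) / real n"

definition univ_strat :: "nat \<Rightarrow> param measure \<Rightarrow> (market \<Rightarrow> nat \<Rightarrow> param \<Rightarrow> nat \<Rightarrow> real) \<Rightarrow> market \<Rightarrow> nat \<Rightarrow> nat \<Rightarrow> real" where
  "univ_strat m M S x t = (\<lambda>i. (\<integral>w. S x t w i * wealth m S x t w \<partial>M) / (\<integral>w. wealth m S x t w \<partial>M))"

definition zeta :: "nat \<Rightarrow> param measure \<Rightarrow> (market \<Rightarrow> nat \<Rightarrow> param \<Rightarrow> nat \<Rightarrow> real) \<Rightarrow> market \<Rightarrow> nat \<Rightarrow> param \<Rightarrow> real" where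
  "zeta m M S x t w = wealth m S x t w / (\<integral>v. wealth m S x t v \<partial>M)"

definition univ_bar :: "nat \<Rightarrow> param measure \<Rightarrow> (market \<Rightarrow> nat \<Rightarrow> param \<Rightarrow> nat \<Rightarrow> real) \<Rightarrow> (market \<Rightarrow> nat \<Rightarrow> param \<Rightarrow> real) \<Rightarrow> market \<Rightarrow> nat \<Rightarrow> nat \<Rightarrow> real" where
  "univ_bar m M S zb x t = (\<lambda>i. \<integral>w. S x t w i * zb x t w \<partial>M)"

definition prob_density :: "param measure \<Rightarrow> (param \<Rightarrow> real) \<Rightarrow> bool" where
  "prob_density M f \<longleftrightarrow> f \<in> borel_measurable M \<and> (AE w in M. 0 \<le> f w)
      \<and> integrable M f \<and> (\<integral>w. f w \<partial>M) = 1"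

definition cond_L :: "nat \<Rightarrow> real \<Rightarrow> param measure \<Rightarrow> (market \<Rightarrow> nat \<Rightarrow> param \<Rightarrow> nat \<Rightarrow> real) \<Rightarrow> bool" where
  "cond_L m \<epsilon> M S \<longleftrightarrow> (\<forall>x t. \<forall>i<m. \<forall>w\<in>space M. S x t w i \<ge> \<epsilon> / (2 * real m * (real t + 1)^2))"

definition universalization :: "nat \<Rightarrow> param measure \<Rightarrow> (market \<Rightarrow> nat \<Rightarrow> param \<Rightarrow> nat \<Rightarrow> real) \<Rightarrow> (market \<Rightarrow> nat \<Rightarrow> nat \<Rightarrow> real) \<Rightarrow> bool" where
  "universalization m M S U \<longleftrightarrow> (\<exists>\<eta> :: nat \<Rightarrow> real. \<eta> \<longlonglongrightarrow> 0 \<and>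
     (\<forall>x n. valid_market m x \<longrightarrow>
        growth_pf m U x n \<ge> (SUP w\<in>space M. growth m S x n w) - \<eta> n))"

end

theory Submission imports Defs begin

(* Since \<U>\<^sub>t(S) is a \<zeta>\<^sub>t-average of S\<^sub>t, condition (L\<^sub>\<epsilon>) bounds each of its
   components below by c = \<epsilon> / (2 m (t+1)^2). Replacing \<zeta>\<^sub>t by a density at L1-distance
   at most \<epsilon>^2 / (4 m (t+1)^4) = c * \<epsilon> / (2 (t+1)^2) moves each component by at most that
   distance, so the period-t return of the approximation is at least 1 - \<epsilon> / (2 (t+1)^2)
   times that of \<U>(S). Weierstrass' product inequality and \<Sum> 1/(t+1)^2 \<le> 2 turn these
   factors into the overall factor 1 - \<epsilon>; a constant factor in wealth shifts the growth
   rate only by ln (1 - \<epsilon>) / n \<longrightarrow> 0, which preserves universality. *)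

lemma integrable_mult_bounded_by_one:
  fixes f s :: "'a \<Rightarrow> real"
  assumes "integrable M f" and "s \<in> borel_measurable M"
    and "\<And>w. w \<in> space M \<Longrightarrow> \<bar>s w\<bar> \<le> 1"
  shows "integrable M (\<lambda>w. s w * f w)"
  using assms by (intro Bochner_Integration.integrable_bound[OF assms(1)])
    (auto simp: abs_mult intro!: AE_I2 mult_left_le_one_le)

lemma integral_mult_diff_le:
  fixes f g s :: "'a \<Rightarrow> real"
  assumes f: "integrable M f" and g: "integrable M g" and s: "s \<in> borel_measurable M"
    and s_bound: "\<And>w. w \<in> space M \<Longrightarrow> \<bar>s w\<bar> \<le> 1"
  shows "\<bar>(\<integral>w. s w * f w \<partial>M) - (\<integral>w. s w * g w \<partial>M)\<bar> \<le> (\<integral>w. \<bar>f w - g w\<bar> \<partial>M)"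
proof -
  have "(\<integral>w. s w * f w \<partial>M) - (\<integral>w. s w * g w \<partial>M) = (\<integral>w. s w * (f w - g w) \<partial>M)"
    using integrable_mult_bounded_by_one[OF f s s_bound] integrable_mult_bounded_by_one[OF g s s_bound]
    by (simp add: right_diff_distrib)
  also have "\<bar>\<dots>\<bar> \<le> (\<integral>w. \<bar>s w * (f w - g w)\<bar> \<partial>M)"
    using integral_norm_bound[of M "\<lambda>w. s w * (f w - g w)"] by simp
  also have "\<dots> \<le> (\<integral>w. \<bar>f w - g w\<bar> \<partial>M)"
    using f g s s_bound integrable_mult_bounded_by_one[of M "\<lambda>w. f w - g w" s]
    by (intro integral_mono integrable_abs)
      (auto simp: abs_mult intro: mult_left_le_one_le)
  finally show ?thesis .
qed

lemma integral_mult_density_ge: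
  fixes f s :: "'a \<Rightarrow> real"
  assumes f: "integrable M f" "AE w in M. 0 \<le> f w" "(\<integral>v. f v \<partial>M) = 1"
    and s: "s \<in> borel_measurable M" "\<And>w. w \<in> space M \<Longrightarrow> \<bar>s w\<bar> \<le> 1"
    and lower: "\<And>w. w \<in> space M \<Longrightarrow> c \<le> s w"
  shows "c \<le> (\<integral>w. s w * f w \<partial>M)"
proof -
  have "c = (\<integral>w. c * f w \<partial>M)"
    using f(3) by simp
  also have "\<dots> \<le> (\<integral>w. s w * f w \<partial>M)"
  proof (rule integral_mono_AE)
    show "AE w in M. c * f w \<le> s w * f w"
      using f(2) AE_space by eventually_elim (auto intro: mult_right_mono lower)
  qed (use f(1) integrable_mult_bounded_by_one[OF f(1) s] in auto)
  finally show ?thesis .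
qed

text \<open>Positivity of the normalizer comes from the closeness to \<open>z\<close> alone, so nothing about
  the parameter measure (e.g. \<open>k \<ge> 1\<close>) is needed: if the integral of \<open>W\<close> were \<open>0\<close>, the
  junk value \<open>W / 0 = 0\<close> would put the normalization at distance \<open>1\<close> from \<open>z\<close>.\<close>

lemma normalizer_pos_if_close_to_density:
  fixes W z :: "'a \<Rightarrow> real"
  assumes W: "AE w in M. 0 \<le> W w"
    and z: "z \<in> borel_measurable M" "AE w in M. 0 \<le> z w" "(\<integral>v. z v \<partial>M) = 1"
    and close: "(\<integral>w. \<bar>W w / (\<integral>v. W v \<partial>M) - z w\<bar> \<partial>M) < 1"
  shows "integrable M W" and "0 < (\<integral>v. W v \<partial>M)"
proof -
  have "(\<integral>v. W v \<partial>M) \<noteq> 0"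
  proof
    assume "(\<integral>v. W v \<partial>M) = 0"
    then have "(\<integral>w. \<bar>W w / (\<integral>v. W v \<partial>M) - z w\<bar> \<partial>M) = (\<integral>v. z v \<partial>M)"
      using z(1,2) by (intro integral_cong_AE) auto
    then show False
      using close z(3) by simp
  qed
  then show "integrable M W"
    using not_integrable_integral_eq by blast
  show "0 < (\<integral>v. W v \<partial>M)"
    using \<open>(\<integral>v. W v \<partial>M) \<noteq> 0\<close> integral_nonneg_AE[OF W] by linarith
qed

lemma dotp_pos:
  assumes "0 < m" and "\<And>i. i < m \<Longrightarrow> 0 < u i" and "\<And>i. i < m \<Longrightarrow> 0 < y i"
  shows "0 < dotp m u y"
  unfolding dotp_def using assms by (intro sum_pos) auto

lemma dotp_mult_le_if_close:
  assumes lower: "\<And>i. i < m \<Longrightarrow> c \<le> u i" and close: "\<And>i. i < m \<Longrightarrow> u i - a * c \<le> v i"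
    and "0 \<le> a" and y: "\<And>i. i < m \<Longrightarrow> 0 \<le> y i"
  shows "(1 - a) * dotp m u y \<le> dotp m v y"
  unfolding dotp_def sum_distrib_left
proof (rule sum_mono)
  fix i assume "i \<in> {..<m}"
  then have "(1 - a) * u i \<le> v i"
    using lower[of i] close[of i] \<open>0 \<le> a\<close> mult_left_mono[of c "u i" a] by (simp add: algebra_simps)
  then show "(1 - a) * (u i * y i) \<le> v i * y i"
    using y \<open>i \<in> {..<m}\<close> by (metis lessThan_iff mult.assoc mult_right_mono)
qed

lemma wealth_measurable:
  assumes "is_strategy m M S"
  shows "wealth m S x t \<in> borel_measurable M"
  using assms unfolding is_strategy_def wealth_def dotp_def
  by (intro borel_measurable_prod borel_measurable_sum borel_measurable_times) auto

lemma wealth_pos: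
  assumes "cond_L m \<epsilon> M S" and "0 < \<epsilon>" and "0 < m" and "valid_market m x" and "w \<in> space M"
  shows "0 < wealth m S x t w"
  unfolding wealth_def
proof (intro prod_pos ballI dotp_pos)
  fix s i assume "i < m"
  have "0 < \<epsilon> / (2 * real m * (real s + 1)^2)"
    using assms(2,3) by simp
  also have "\<dots> \<le> S x s w i"
    using assms(1,5) \<open>i < m\<close> unfolding cond_L_def by auto
  finally show "0 < S x s w i" .
  show "0 < x s i"
    using assms(4) \<open>i < m\<close> unfolding valid_market_def by auto
qed (use assms(3) in auto)

lemma zeta_prob_density:
  assumes "is_strategy m M S" and wealth_pos: "\<And>w. w \<in> space M \<Longrightarrow> 0 < wealth m S x t w"
    and "prob_density M z" and close: "(\<integral>w. \<bar>zeta m M S x t w - z w\<bar> \<partial>M) < 1"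
  shows "prob_density M (zeta m M S x t)"
proof -
  have W: "AE w in M. 0 \<le> wealth m S x t w"
    using wealth_pos by (auto intro!: AE_I2 less_imp_le)
  note normalizer = normalizer_pos_if_close_to_density[OF W, of z]
  have "integrable M (wealth m S x t)" and "0 < (\<integral>v. wealth m S x t v \<partial>M)"
    using normalizer \<open>prob_density M z\<close> close unfolding prob_density_def zeta_def by auto
  then show ?thesis
    using wealth_measurable[OF \<open>is_strategy m M S\<close>] wealth_pos
    unfolding prob_density_def zeta_def by (auto intro!: AE_I2 less_imp_le)
qed

lemma univ_strat_eq_integral_zeta:
  "univ_strat m M S x t i = (\<integral>w. S x t w i * zeta m M S x t w \<partial>M)"
  unfolding univ_strat_def zeta_def by (simp add: times_divide_eq_right)

lemma univ_bar_period_factor: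
  fixes M :: "param measure"
  assumes "0 < m" and "0 < \<epsilon>" and "\<epsilon> \<le> 1"
    and strategy: "is_strategy m M S" and cond: "cond_L m \<epsilon> M S" and x: "valid_market m x"
    and density: "prob_density M (zb x t)"
    and close: "(\<integral>w. \<bar>zeta m M S x t w - zb x t w\<bar> \<partial>M) \<le> \<epsilon>^2 / (4 * real m * (real t + 1)^4)"
  shows "0 < dotp m (univ_strat m M S x t) (x t)"
    and "(1 - \<epsilon> / (2 * (real t + 1)^2)) * dotp m (univ_strat m M S x t) (x t)
           \<le> dotp m (univ_bar m M S zb x t) (x t)"
proof -
  define a where "a = \<epsilon> / (2 * (real t + 1)^2)"
  define c where "c = \<epsilon> / (2 * real m * (real t + 1)^2)"
  have ac: "a * c = \<epsilon>^2 / (4 * real m * (real t + 1)^4)"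
    unfolding a_def c_def by (simp add: field_simps power2_eq_square power4_eq_xxxx)
  have "\<epsilon>^2 / (4 * real m * (real t + 1)^4) < 1"
  proof -
    have "\<epsilon>^2 \<le> 1"
      using assms(2,3) by (simp add: power_le_one)
    moreover have "1 \<le> real m * (real t + 1)^4"
      using assms(1) by (simp add: one_le_power mult_ge1_I)
    ultimately show ?thesis
      by (simp add: divide_less_eq)
  qed
  then have zeta: "prob_density M (zeta m M S x t)"
    using zeta_prob_density[OF strategy _ density] close wealth_pos[OF cond assms(2,1) x] by auto
  have S_measurable: "(\<lambda>w. S x t w i) \<in> borel_measurable M"
    and S_bound: "\<And>w. w \<in> space M \<Longrightarrow> \<bar>S x t w i\<bar> \<le> 1" if "i < m" for i
    using strategy that unfolding is_strategy_def prob_simplex_def by auto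
  have lower: "c \<le> univ_strat m M S x t i" if "i < m" for i
    unfolding univ_strat_eq_integral_zeta
    using zeta cond that unfolding prob_density_def cond_L_def c_def
    by (intro integral_mult_density_ge S_measurable S_bound) auto
  have "univ_strat m M S x t i - a * c \<le> univ_bar m M S zb x t i" if "i < m" for i
    using integral_mult_diff_le[OF _ _ S_measurable S_bound, of "zeta m M S x t" "zb x t"]
      zeta density close that
    unfolding univ_strat_eq_integral_zeta univ_bar_def prob_density_def ac by fastforce
  moreover have "0 < x t i" if "i < m" for i
    using x that unfolding valid_market_def by auto
  ultimately show "(1 - a) * dotp m (univ_strat m M S x t) (x t) \<le> dotp m (univ_bar m M S zb x t) (x t)"
    using assms(2) lower by (intro dotp_mult_le_if_close) (auto simp: a_def less_imp_le)
  have "0 < c"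
    using assms(1,2) by (simp add: c_def)
  then show "0 < dotp m (univ_strat m M S x t) (x t)"
    using lower x assms(1) unfolding valid_market_def by (intro dotp_pos) (auto intro: order.strict_trans2)
qed

lemma one_minus_sum_mult_prod_le:
  fixes a u v :: "'a \<Rightarrow> real"
  assumes "\<And>t. t \<in> A \<Longrightarrow> a t \<in> {0..1}" and "\<And>t. t \<in> A \<Longrightarrow> 0 \<le> u t"
    and "\<And>t. t \<in> A \<Longrightarrow> (1 - a t) * u t \<le> v t"
  shows "(1 - sum a A) * (\<Prod>t\<in>A. u t) \<le> (\<Prod>t\<in>A. v t)"
proof -
  have "(1 - sum a A) * (\<Prod>t\<in>A. u t) \<le> (\<Prod>t\<in>A. 1 - a t) * (\<Prod>t\<in>A. u t)"
    using assms(1,2) by (intro mult_right_mono Weierstrass_prod_ineq prod_nonneg) auto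
  also have "\<dots> = (\<Prod>t\<in>A. (1 - a t) * u t)"
    by (simp add: prod.distrib)
  also have "\<dots> \<le> (\<Prod>t\<in>A. v t)"
    using assms by (intro prod_mono) auto
  finally show ?thesis .
qed

lemma sum_inverse_squares_le: "(\<Sum>t<n. 1 / (real t + 1)^2) \<le> 2 - 2 / (real n + 1)"
proof (induction n)
  case (Suc n)
  have "1 / (real n + 1)^2 \<le> 2 / ((real n + 1) * (real n + 2))"
    by (simp add: divide_simps power2_eq_square)
  also have "\<dots> = 2 / (real n + 1) - 2 / (real (Suc n) + 1)"
    by (simp add: field_simps)
  finally show ?case
    using Suc by simp
qed simp

lemma wealth_pf_ge_if_period_factors:
  assumes "0 \<le> \<epsilon>" and "\<epsilon> \<le> 1"
    and "\<And>t. 0 \<le> dotp m (U x t) (x t)"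
    and "\<And>t. (1 - \<epsilon> / (2 * (real t + 1)^2)) * dotp m (U x t) (x t) \<le> dotp m (V x t) (x t)"
  shows "(1 - \<epsilon>) * wealth_pf m U x n \<le> wealth_pf m V x n"
proof -
  define a where "a t = \<epsilon> / (2 * (real t + 1)^2)" for t :: nat
  have a: "a t \<in> {0..1}" for t
  proof -
    have "1 \<le> (real t + 1)^2"
      by simp
    then have "\<epsilon> \<le> 2 * (real t + 1)^2"
      using assms(2) by linarith
    then show ?thesis
      using assms(1) by (simp add: a_def)
  qed
  have "(\<Sum>t<n. 1 / (real t + 1)^2) \<le> 2 - 2 / (real n + 1)"
    by (rule sum_inverse_squares_le)
  also have "\<dots> \<le> 2"
    by simp
  finally have "(\<Sum>t<n. 1 / (real t + 1)^2) \<le> 2" .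
  then have "\<epsilon> / 2 * (\<Sum>t<n. 1 / (real t + 1)^2) \<le> \<epsilon> / 2 * 2"
    using assms(1) by (intro mult_left_mono) auto
  then have "sum a {..<n} \<le> \<epsilon>"
    unfolding a_def sum_distrib_left by simp
  then have "(1 - \<epsilon>) * wealth_pf m U x n \<le> (1 - sum a {..<n}) * wealth_pf m U x n"
    using assms(3) unfolding wealth_pf_def by (intro mult_right_mono prod_nonneg) auto
  also have "\<dots> \<le> wealth_pf m V x n"
    unfolding wealth_pf_def using a assms(3,4) unfolding a_def by (rule one_minus_sum_mult_prod_le)
  finally show ?thesis .
qed

lemma universalization_if_wealth_pf_ge:
  assumes "universalization m M S U" and "0 < C"
    and U_pos: "\<And>x n. valid_market m x \<Longrightarrow> 0 < wealth_pf m U x n"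
    and V_ge: "\<And>x n. valid_market m x \<Longrightarrow> C * wealth_pf m U x n \<le> wealth_pf m V x n"
  shows "universalization m M S V"
proof -
  obtain \<eta> :: "nat \<Rightarrow> real" where "\<eta> \<longlonglongrightarrow> 0"
    and U_growth: "\<And>x n. valid_market m x \<Longrightarrow> growth_pf m U x n \<ge> (SUP w\<in>space M. growth m S x n w) - \<eta> n"
    using assms(1) unfolding universalization_def by blast
  have "(\<lambda>n. ln C / real n) \<longlonglongrightarrow> 0"
    by (intro tendsto_divide_0[OF tendsto_const] filterlim_at_top_imp_at_infinity filterlim_real_sequentially)
  from tendsto_diff[OF \<open>\<eta> \<longlonglongrightarrow> 0\<close> this] have "(\<lambda>n. \<eta> n - ln C / real n) \<longlonglongrightarrow> 0"
    by simp
  moreover have "growth_pf m V x n \<ge> (SUP w\<in>space M. growth m S x n w) - (\<eta> n - ln C / real n)"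
    if "valid_market m x" for x n
  proof -
    have "ln C + ln (wealth_pf m U x n) = ln (C * wealth_pf m U x n)"
      using U_pos[OF that, of n] \<open>0 < C\<close> by (simp add: ln_mult)
    also have "\<dots> \<le> ln (wealth_pf m V x n)"
      using V_ge[OF that, of n] U_pos[OF that, of n] \<open>0 < C\<close> by (intro ln_mono) auto
    finally have "ln C + ln (wealth_pf m U x n) \<le> ln (wealth_pf m V x n)" .
    then have "growth_pf m U x n + ln C / real n \<le> growth_pf m V x n"
      unfolding growth_pf_def by (simp add: divide_right_mono flip: add_divide_distrib)
    then show ?thesis
      using U_growth[OF that, of n] by linarith
  qed
  ultimately show ?thesis
    unfolding universalization_def by blast
qed

theorem mainTheorem10:
  fixes m k l :: nat and \<epsilon> :: real
    and S :: "market \<Rightarrow> nat \<Rightarrow> param \<Rightarrow> nat \<Rightarrow> real"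
    and zb :: "market \<Rightarrow> nat \<Rightarrow> param \<Rightarrow> real"
  assumes "m \<ge> 2" and "k \<ge> 1" and "0 < \<epsilon>" and "\<epsilon> < 1"
    and "is_strategy m (param_measure k l) S"
    and "cond_L m \<epsilon> (param_measure k l) S"
    and "\<And>x t. valid_market m x \<Longrightarrow> prob_density (param_measure k l) (zb x t)"
    and "\<And>x t. valid_market m x \<Longrightarrow>
           (\<integral>w. \<bar>zeta m (param_measure k l) S x t w - zb x t w\<bar> \<partial>param_measure k l)
             \<le> \<epsilon>^2 / (4 * real m * (real t + 1)^4)"
  shows "(\<forall>x. valid_market m x \<longrightarrow> (\<forall>n.
            wealth_pf m (univ_bar m (param_measure k l) S zb) x n
              \<ge> (1 - \<epsilon>) * wealth_pf m (univ_strat m (param_measure k l) S) x n))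
       \<and> (universalization m (param_measure k l) S (univ_strat m (param_measure k l) S)
            \<longrightarrow> universalization m (param_measure k l) S (univ_bar m (param_measure k l) S zb))"
proof -
  define M where "M = param_measure k l"
  define U where "U = univ_strat m M S"
  define Ub where "Ub = univ_bar m M S zb"
  have "0 < m" and "\<epsilon> \<le> 1"
    using assms(1,4) by auto
  have factor: "0 < dotp m (U x t) (x t)"
      "(1 - \<epsilon> / (2 * (real t + 1)^2)) * dotp m (U x t) (x t) \<le> dotp m (Ub x t) (x t)"
    if "valid_market m x" for x t
    using univ_bar_period_factor[where zb = zb, OF \<open>0 < m\<close> assms(3) \<open>\<epsilon> \<le> 1\<close> assms(5,6)
        that assms(7,8)[OF that, of t]]
    unfolding M_def U_def Ub_def by auto
  have U_pos: "0 < wealth_pf m U x n" if "valid_market m x" for x n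
    unfolding wealth_pf_def using factor(1)[OF that] by (intro prod_pos) auto
  have wealth: "(1 - \<epsilon>) * wealth_pf m U x n \<le> wealth_pf m Ub x n" if "valid_market m x" for x n
    using factor[OF that] assms(3) \<open>\<epsilon> \<le> 1\<close>
    by (intro wealth_pf_ge_if_period_factors) (simp_all add: less_imp_le)
  have "universalization m M S Ub" if "universalization m M S U"
    using universalization_if_wealth_pf_ge[OF that _ U_pos wealth] assms(4) by simp
  then show ?thesis
    using wealth unfolding M_def U_def Ub_def by blast
qed

end
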